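(* Let $0<T\le 1$ and let $(f_{n,m})$, $(g_{n,m})$ ($n\in\mathbb{Z}_+$, $m\in\mathbb{Z}$) be coefficient arrays. Then $$\Big|\sum_{n,m}f_{n,m}g_{n,m}\Big|\lesssim T\,|||f|||_{0,\frac12;T}\,|||g|||_{0,\frac12;T},$$ with an absolute implicit constant.
   Context: For a coefficient array $(h_{n,m})_{n\in\mathbb{Z}_+,m\in\mathbb{Z}}$ (identified with $h(x,t)=\sum h_{n,m}e_n(x)e(mt)$, where $e_n(x)=\sin(n\pi|x|)/|x|$ on the unit ball of $\mathbb{R}^3$ and $e(y)=e^{2\pi iy}$), $|||h|||_{0,\frac12;T}\le1$ means $h_{n,m}=\frac{a_{n,m}}{(|n^2-m|+\frac1T)^{1/2}}+\frac{a_n}{|n^2-m|}\mathbf{1}_{|n^2-m|>1/T}$ for some $(a_{n,m})$, $(a_n)$ with $\sum_{n,m}|a_{n,m}|^2\le1$, $\sum_n|a_n|^2\le1$; $|||\cdot|||_{0,\frac12;T}$ is the gauge (norm) of this convex set. *)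

theory Defs
  imports "HOL-Analysis.Analysis"
begin

text \<open>Coefficient arrays are functions h :: nat => int => complex; only entries with
  n >= 1 (n in Z_+) are relevant.  The index set is Z_+ x Z.\<close>

definition idx :: "(nat \<times> int) set" where
  "idx = {1..} \<times> UNIV"

definition unit_ball_X :: "real \<Rightarrow> (nat \<Rightarrow> int \<Rightarrow> complex) \<Rightarrow> bool" where
  "unit_ball_X T h \<longleftrightarrow>
     (\<exists>a :: nat \<Rightarrow> int \<Rightarrow> complex. \<exists>b :: nat \<Rightarrow> complex.
        (\<lambda>(n,m). (norm (a n m))\<^sup>2) summable_on idx \<and>
        (\<Sum>\<^sub>\<infinity>(n,m)\<in>idx. (norm (a n m))\<^sup>2) \<le> 1 \<and>
        (\<lambda>n. (norm (b n))\<^sup>2) summable_on {1..} \<and>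
        (\<Sum>\<^sub>\<infinity>n\<in>{1..}. (norm (b n))\<^sup>2) \<le> 1 \<and>
        (\<forall>n\<ge>1. \<forall>m. h n m =
            a n m / complex_of_real (sqrt (\<bar>real_of_int (int n ^ 2 - m)\<bar> + 1 / T))
          + (if \<bar>real_of_int (int n ^ 2 - m)\<bar> > 1 / T
             then b n / complex_of_real \<bar>real_of_int (int n ^ 2 - m)\<bar> else 0)))"

text \<open>The gauge (Minkowski functional) of that convex set, valued in extended reals
  (infinite if h lies in no dilate of the unit ball).\<close>

definition normX :: "real \<Rightarrow> (nat \<Rightarrow> int \<Rightarrow> complex) \<Rightarrow> ereal" where
  "normX T h = Inf {ereal l | l. l > 0 \<and> unit_ball_X T (\<lambda>n m. h n m / complex_of_real l)}"

end

theory Submission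
  imports Defs
begin

text \<open>Every h in the unit ball is square summable with \<open>\<Sum>|h|\<^sup>2 \<le> 10 T\<close>: the first part of
  its representation contributes at most \<open>T \<Sum>|a|\<^sup>2\<close>, and for the second part
  \<open>\<Sum>\<^sub>m |n\<^sup>2-m|\<^sup>-\<^sup>2\<close> over \<open>|n\<^sup>2-m| > 1/T\<close> is a tail of \<open>\<Sum> 1/k\<^sup>2\<close>, hence \<open>O(T)\<close> uniformly in n.
  The bilinear bound then follows from \<open>|fg| \<le> (|f|\<^sup>2+|g|\<^sup>2)/2\<close> and the homogeneity of the gauge.\<close>

lemma sum_inverse_squares_atLeastAtMost_le:
  fixes a b :: nat
  assumes "2 \<le> a" "a \<le> b"
  shows "(\<Sum>k=a..b. 1 / real k ^ 2) \<le> 1 / (real a - 1) - 1 / real b"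
  using assms(2)
proof (induction b rule: dec_induct)
  case base
  have "1 / real a ^ 2 \<le> 1 / (real a * (real a - 1))"
    using assms(1) by (intro divide_left_mono) (auto simp: power2_eq_square)
  also have "\<dots> = 1 / (real a - 1) - 1 / real a"
    using assms(1) by (simp add: field_simps)
  finally show ?case by simp
next
  case (step b)
  have "1 / real (Suc b) ^ 2 \<le> 1 / (real (Suc b) * real b)"
    using assms step.hyps by (intro divide_left_mono) (auto simp: power2_eq_square)
  also have "\<dots> = 1 / real b - 1 / real (Suc b)"
    using assms step.hyps by (simp add: field_simps)
  finally show ?case using step.IH step.hyps by simp
qed

lemma sum_inverse_squares_greater_le:
  fixes K :: "nat set" and c :: real
  assumes "finite K" "K \<subseteq> {k. c < real k}" "1 \<le> c"
  shows "(\<Sum>k\<in>K. 1 / real k ^ 2) \<le> 2 / c"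
proof -
  define a where "a = nat \<lfloor>c\<rfloor> + 1"
  have a: "2 \<le> a" "real a - 1 = of_int \<lfloor>c\<rfloor>"
    using assms(3) by (auto simp: a_def le_nat_iff)
  have "a \<le> k" if "k \<in> K" for k
  proof -
    have "c < real k" using that assms(2) by blast
    then have "\<lfloor>c\<rfloor> < int k" by (simp add: floor_less_iff)
    moreover have "0 \<le> \<lfloor>c\<rfloor>" using assms(3) by simp
    ultimately show ?thesis by (metis a_def Suc_eq_plus1 Suc_leI nat_less_iff)
  qed
  then have "K \<subseteq> {a..Max K}"
    using assms(1) by auto
  then have "(\<Sum>k\<in>K. 1 / real k ^ 2) \<le> (\<Sum>k=a..Max K. 1 / real k ^ 2)"
    by (intro sum_mono2) auto
  also have "\<dots> \<le> 1 / (real a - 1)"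
  proof (cases "a \<le> Max K")
    case True
    have "0 \<le> 1 / real (Max K)" by simp
    then show ?thesis using sum_inverse_squares_atLeastAtMost_le[OF a(1) True] by linarith
  qed (use a assms(3) in auto)
  also have "\<dots> \<le> 2 / c"
    using a assms(3) by (simp add: field_simps) linarith
  finally show ?thesis .
qed

lemma sum_inverse_squares_abs_greater_le:
  fixes K :: "int set" and c :: real
  assumes "finite K" "K \<subseteq> {k. c < \<bar>real_of_int k\<bar>}" "1 \<le> c"
  shows "(\<Sum>k\<in>K. 1 / real_of_int k ^ 2) \<le> 4 / c"
proof -
  define P where "P = {k\<in>K. 0 < k}"
  define N where "N = {k\<in>K. k < 0}"
  have split: "K = P \<union> N" "P \<inter> N = {}"
    using assms by (auto simp: P_def N_def)
  have "(\<Sum>k\<in>P. 1 / real_of_int k ^ 2) = (\<Sum>k\<in>nat ` P. 1 / real k ^ 2)"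
    by (subst sum.reindex) (auto simp: inj_on_def P_def)
  also have "\<dots> \<le> 2 / c"
    by (rule sum_inverse_squares_greater_le) (use assms in \<open>auto simp: P_def\<close>)
  finally have pos: "(\<Sum>k\<in>P. 1 / real_of_int k ^ 2) \<le> 2 / c" .
  have "(\<Sum>k\<in>N. 1 / real_of_int k ^ 2) = (\<Sum>k\<in>(\<lambda>k. nat (- k)) ` N. 1 / real k ^ 2)"
    by (subst sum.reindex) (auto simp: inj_on_def N_def)
  also have "\<dots> \<le> 2 / c"
    by (rule sum_inverse_squares_greater_le) (use assms in \<open>auto simp: N_def\<close>)
  finally have neg: "(\<Sum>k\<in>N. 1 / real_of_int k ^ 2) \<le> 2 / c" .
  have "finite P" "finite N" using assms(1) by (auto simp: P_def N_def)
  then show ?thesis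
    using pos neg by (simp add: split sum.union_disjoint)
qed

text \<open>The squared multiplier of \<open>b n\<close> in the representation of the unit ball.\<close>

definition tail_weight :: "real \<Rightarrow> nat \<Rightarrow> int \<Rightarrow> real" where
  "tail_weight T n m =
     (if \<bar>real_of_int (int n ^ 2 - m)\<bar> > 1 / T then 1 / real_of_int (int n ^ 2 - m) ^ 2 else 0)"

lemma tail_weight_nonneg: "0 \<le> tail_weight T n m"
  by (simp add: tail_weight_def)

lemma sum_tail_weight_le:
  assumes "0 < T" "T \<le> 1" "finite M"
  shows "(\<Sum>m\<in>M. tail_weight T n m) \<le> 4 * T"
proof -
  define M' where "M' = {m\<in>M. \<bar>real_of_int (int n ^ 2 - m)\<bar> > 1 / T}"
  have "(\<Sum>m\<in>M. tail_weight T n m) = (\<Sum>m\<in>M'. 1 / real_of_int (int n ^ 2 - m) ^ 2)"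
    using assms(3) unfolding M'_def tail_weight_def
    by (simp add: sum.inter_filter del: of_int_diff)
  also have "\<dots> = (\<Sum>k\<in>(\<lambda>m. int n ^ 2 - m) ` M'. 1 / real_of_int k ^ 2)"
    by (subst sum.reindex) (auto simp: inj_on_def)
  also have "\<dots> \<le> 4 / (1 / T)"
    by (rule sum_inverse_squares_abs_greater_le) (use assms in \<open>auto simp: M'_def\<close>)
  finally show ?thesis by simp
qed

lemma
  fixes u :: "'a \<Rightarrow> real" and w :: "'a \<Rightarrow> 'b \<Rightarrow> real"
  assumes u: "u summable_on N" "\<And>n. n \<in> N \<Longrightarrow> 0 \<le> u n"
    and w: "\<And>n m. 0 \<le> w n m"
    and rows: "\<And>n M. n \<in> N \<Longrightarrow> finite M \<Longrightarrow> (\<Sum>m\<in>M. w n m) \<le> B"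
  shows summable_on_mult_row_bounded: "(\<lambda>(n, m). u n * w n m) summable_on N \<times> UNIV"
    and infsum_mult_row_bounded_le: "(\<Sum>\<^sub>\<infinity>(n, m)\<in>N \<times> UNIV. u n * w n m) \<le> B * infsum u N"
proof -
  have partial: "sum (\<lambda>(n, m). u n * w n m) F \<le> B * infsum u N"
    if F: "finite F" "F \<subseteq> N \<times> UNIV" for F
  proof -
    have fin: "finite (fst ` F)" "finite (snd ` F)" and sub: "fst ` F \<subseteq> N"
      using F by auto
    have "sum (\<lambda>(n, m). u n * w n m) F \<le> sum (\<lambda>(n, m). u n * w n m) (fst ` F \<times> snd ` F)"
      by (rule sum_mono2) (use fin sub u w in \<open>auto simp: subset_fst_snd\<close>)
    also have "\<dots> = (\<Sum>n\<in>fst ` F. u n * (\<Sum>m\<in>snd ` F. w n m))"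
      by (simp add: sum.cartesian_product[symmetric] sum_distrib_left)
    also have "\<dots> \<le> (\<Sum>n\<in>fst ` F. u n * B)"
      by (intro sum_mono mult_left_mono rows) (use fin sub u in auto)
    also have "\<dots> = B * (\<Sum>n\<in>fst ` F. u n)"
      by (simp add: sum_distrib_left mult.commute)
    also have "\<dots> \<le> B * infsum u N"
    proof (cases "N = {}")
      case False
      then have "0 \<le> B" using rows[of _ "{}"] by fastforce
      then show ?thesis
        by (intro mult_left_mono finite_sum_le_infsum u fin sub) (use sub u in auto)
    qed (use sub in simp)
    finally show ?thesis .
  qed
  show sum: "(\<lambda>(n, m). u n * w n m) summable_on N \<times> UNIV"
    by (rule nonneg_bdd_above_summable_on)
      (use u w partial in \<open>auto intro!: bdd_aboveI2[where M = "B * infsum u N"]\<close>)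
  show "(\<Sum>\<^sub>\<infinity>(n, m)\<in>N \<times> UNIV. u n * w n m) \<le> B * infsum u N"
    by (rule infsum_le_finite_sums[OF sum partial])
qed

lemma norm_sq_ball_entry_le:
  fixes \<alpha> \<beta> :: complex and d T :: real
  assumes "0 \<le> d" "0 < T"
  shows "(norm (\<alpha> / complex_of_real (sqrt (d + 1 / T))
                + (if d > 1 / T then \<beta> / complex_of_real d else 0)))\<^sup>2
         \<le> 2 * (T * (norm \<alpha>)\<^sup>2 + (norm \<beta>)\<^sup>2 * (if d > 1 / T then 1 / d ^ 2 else 0))"
proof -
  define u where "u = norm \<alpha> / sqrt (d + 1 / T)"
  define v where "v = (if d > 1 / T then norm \<beta> / d else 0)"
  have pos: "0 < d + 1 / T" using assms by (simp add: add_nonneg_pos)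
  have "norm (\<alpha> / complex_of_real (sqrt (d + 1 / T))) = u"
    using pos by (simp add: u_def norm_divide)
  moreover have "norm (if d > 1 / T then \<beta> / complex_of_real d else 0) = v"
    using assms(1) by (simp add: v_def norm_divide)
  ultimately have "norm (\<alpha> / complex_of_real (sqrt (d + 1 / T))
                         + (if d > 1 / T then \<beta> / complex_of_real d else 0)) \<le> u + v"
    by (metis norm_triangle_ineq)
  then have "(norm (\<alpha> / complex_of_real (sqrt (d + 1 / T))
                + (if d > 1 / T then \<beta> / complex_of_real d else 0)))\<^sup>2 \<le> (u + v)\<^sup>2"
    by (rule power_mono) simp
  also have "\<dots> \<le> 2 * (u\<^sup>2 + v\<^sup>2)"
    using sum_squares_bound[of u v] by (simp add: power2_sum)
  also have "u\<^sup>2 \<le> T * (norm \<alpha>)\<^sup>2"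
  proof -
    have "u\<^sup>2 = (norm \<alpha>)\<^sup>2 / (d + 1 / T)" using pos by (simp add: u_def power_divide)
    also have "\<dots> \<le> (norm \<alpha>)\<^sup>2 / (1 / T)"
      using assms pos by (intro divide_left_mono) auto
    finally show ?thesis by (simp add: mult.commute)
  qed
  also have "v\<^sup>2 = (norm \<beta>)\<^sup>2 * (if d > 1 / T then 1 / d ^ 2 else 0)"
    by (simp add: v_def power_divide)
  finally show ?thesis by simp
qed

lemma
  assumes T: "0 < T" "T \<le> 1" and h: "unit_ball_X T h"
  shows unit_ball_X_square_summable: "(\<lambda>(n, m). (norm (h n m))\<^sup>2) summable_on idx"
    and unit_ball_X_infsum_square_le: "(\<Sum>\<^sub>\<infinity>(n, m)\<in>idx. (norm (h n m))\<^sup>2) \<le> 10 * T"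
proof -
  obtain a b where
      a: "(\<lambda>(n, m). (norm (a n m))\<^sup>2) summable_on idx" "(\<Sum>\<^sub>\<infinity>(n, m)\<in>idx. (norm (a n m))\<^sup>2) \<le> 1"
    and b: "(\<lambda>n. (norm (b n))\<^sup>2) summable_on {1..}" "(\<Sum>\<^sub>\<infinity>n\<in>{1..}. (norm (b n))\<^sup>2) \<le> 1"
    and h_eq: "\<And>n m. n \<ge> 1 \<Longrightarrow> h n m =
        a n m / complex_of_real (sqrt (\<bar>real_of_int (int n ^ 2 - m)\<bar> + 1 / T))
        + (if \<bar>real_of_int (int n ^ 2 - m)\<bar> > 1 / T
           then b n / complex_of_real \<bar>real_of_int (int n ^ 2 - m)\<bar> else 0)"
    using h unfolding unit_ball_X_def by blast
  define A where "A = (\<lambda>(n, m). (norm (a n m))\<^sup>2)"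
  define W where "W = (\<lambda>(n, m). (norm (b n))\<^sup>2 * tail_weight T n m)"
  define P where "P = (\<lambda>x. 2 * (T * A x + W x))"
  have W: "W summable_on idx"
    using summable_on_mult_row_bounded[where w = "tail_weight T", OF b(1) _ tail_weight_nonneg sum_tail_weight_le[OF T]]
    by (auto simp: W_def idx_def)
  have "infsum W idx \<le> 4 * T * infsum (\<lambda>n. (norm (b n))\<^sup>2) {1..}"
    using infsum_mult_row_bounded_le[where w = "tail_weight T", OF b(1) _ tail_weight_nonneg sum_tail_weight_le[OF T]]
    by (auto simp: W_def idx_def)
  also have "\<dots> \<le> 4 * T"
    using mult_left_mono[OF b(2), of "4 * T"] T by simp
  finally have W_le: "infsum W idx \<le> 4 * T" .
  have A: "A summable_on idx" "infsum A idx \<le> 1"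
    using a by (simp_all add: A_def)
  have P: "P summable_on idx"
    unfolding P_def by (intro summable_on_cmult_right summable_on_add A W)
  have "infsum P idx = 2 * (T * infsum A idx + infsum W idx)"
    unfolding P_def using A W
    by (simp add: infsum_cmult_right' infsum_add summable_on_cmult_right)
  also have "\<dots> \<le> 10 * T"
  proof -
    have "T * infsum A idx \<le> T" using mult_left_mono[OF A(2), of T] T by simp
    then show ?thesis using W_le by (simp add: algebra_simps)
  qed
  finally have P_le: "infsum P idx \<le> 10 * T" .
  have entry: "(norm (h n m))\<^sup>2 \<le> P (n, m)" if "(n, m) \<in> idx" for n m
  proof -
    have "n \<ge> 1" using that by (simp add: idx_def)
    have "(norm (h n m))\<^sup>2 \<le> 2 * (T * (norm (a n m))\<^sup>2 + (norm (b n))\<^sup>2 *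
        (if \<bar>real_of_int (int n ^ 2 - m)\<bar> > 1 / T then 1 / \<bar>real_of_int (int n ^ 2 - m)\<bar> ^ 2 else 0))"
      unfolding h_eq[OF \<open>n \<ge> 1\<close>] by (rule norm_sq_ball_entry_le) (use T in auto)
    then show ?thesis
      by (simp only: P_def A_def W_def tail_weight_def power2_abs prod.case)
  qed
  show sq: "(\<lambda>(n, m). (norm (h n m))\<^sup>2) summable_on idx"
    by (rule summable_on_comparison_test[OF P]) (use entry in auto)
  show "(\<Sum>\<^sub>\<infinity>(n, m)\<in>idx. (norm (h n m))\<^sup>2) \<le> 10 * T"
    using infsum_mono[OF sq P] entry P_le by force
qed

lemma norm_infsum_mult_le:
  fixes u v :: "'a \<Rightarrow> 'b :: {banach, real_normed_div_algebra}"
  assumes u: "(\<lambda>x. (norm (u x))\<^sup>2) summable_on A" and v: "(\<lambda>x. (norm (v x))\<^sup>2) summable_on A"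
  shows "norm (\<Sum>\<^sub>\<infinity>x\<in>A. u x * v x)
           \<le> ((\<Sum>\<^sub>\<infinity>x\<in>A. (norm (u x))\<^sup>2) + (\<Sum>\<^sub>\<infinity>x\<in>A. (norm (v x))\<^sup>2)) / 2"
proof -
  define Q where "Q = (\<lambda>x. ((norm (u x))\<^sup>2 + (norm (v x))\<^sup>2) / 2)"
  have Q: "Q summable_on A"
    unfolding Q_def divide_inverse by (intro summable_on_cmult_left summable_on_add u v)
  have pointwise: "norm (u x * v x) \<le> Q x" for x
    using sum_squares_bound[of "norm (u x)" "norm (v x)"] by (simp add: Q_def norm_mult)
  have "(\<lambda>x. norm (u x * v x)) summable_on A"
    by (rule summable_on_comparison_test[OF Q]) (use pointwise in auto)
  then have "(\<lambda>x. u x * v x) summable_on A"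
    by (rule abs_summable_summable)
  then have "norm (\<Sum>\<^sub>\<infinity>x\<in>A. u x * v x) \<le> infsum Q A"
    using norm_infsum_le[OF has_sum_infsum has_sum_infsum[OF Q]] pointwise by blast
  also have "\<dots> = ((\<Sum>\<^sub>\<infinity>x\<in>A. (norm (u x))\<^sup>2) + (\<Sum>\<^sub>\<infinity>x\<in>A. (norm (v x))\<^sup>2)) / 2"
    unfolding Q_def divide_inverse infsum_cmult_left' infsum_add[OF u v] ..
  finally show ?thesis .
qed

lemma unit_ball_X_infsum_mult_le:
  assumes T: "0 < T" "T \<le> 1" and "unit_ball_X T f" "unit_ball_X T g"
  shows "norm (\<Sum>\<^sub>\<infinity>(n, m)\<in>idx. f n m * g n m) \<le> 10 * T"
proof -
  have "norm (\<Sum>\<^sub>\<infinity>(n, m)\<in>idx. f n m * g n m)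
        \<le> ((\<Sum>\<^sub>\<infinity>(n, m)\<in>idx. (norm (f n m))\<^sup>2) + (\<Sum>\<^sub>\<infinity>(n, m)\<in>idx. (norm (g n m))\<^sup>2)) / 2"
    using norm_infsum_mult_le[of "case_prod f" idx "case_prod g"]
      unit_ball_X_square_summable[OF T assms(3)] unit_ball_X_square_summable[OF T assms(4)]
    by (simp add: case_prod_beta')
  also have "\<dots> \<le> 10 * T"
    using unit_ball_X_infsum_square_le[OF T assms(3)] unit_ball_X_infsum_square_le[OF T assms(4)]
    by simp
  finally show ?thesis .
qed

lemma unit_ball_X_scaled_infsum_mult_le:
  assumes T: "0 < T" "T \<le> 1" and l: "0 < l1" "0 < l2"
    and f: "unit_ball_X T (\<lambda>n m. f n m / complex_of_real l1)"
    and g: "unit_ball_X T (\<lambda>n m. g n m / complex_of_real l2)"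
  shows "norm (\<Sum>\<^sub>\<infinity>(n, m)\<in>idx. f n m * g n m) \<le> 10 * T * l1 * l2"
proof -
  have "(\<Sum>\<^sub>\<infinity>(n, m)\<in>idx. f n m * g n m)
        = complex_of_real (l1 * l2) * (\<Sum>\<^sub>\<infinity>(n, m)\<in>idx. f n m / l1 * (g n m / l2))"
    using l by (simp add: infsum_cmult_right'[symmetric] case_prod_beta')
  also have "norm \<dots> \<le> l1 * l2 * (10 * T)"
    using unit_ball_X_infsum_mult_le[OF T f g] l by (simp add: norm_mult abs_of_pos)
  finally show ?thesis by (simp add: algebra_simps)
qed

lemma unit_ball_X_entry_le:
  assumes T: "0 < T" "T \<le> 1" and h: "unit_ball_X T h" and "1 \<le> n"
  shows "(norm (h n m))\<^sup>2 \<le> 10 * T"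
proof -
  have "(\<Sum>(n, m)\<in>{(n, m)}. (norm (h n m))\<^sup>2) \<le> (\<Sum>\<^sub>\<infinity>(n, m)\<in>idx. (norm (h n m))\<^sup>2)"
    by (rule finite_sum_le_infsum[OF unit_ball_X_square_summable[OF T h]])
      (use \<open>1 \<le> n\<close> in \<open>auto simp: idx_def\<close>)
  then show ?thesis using unit_ball_X_infsum_square_le[OF T h] by simp
qed

lemma normX_eq_Inf:
  "normX T h = Inf (ereal ` {l. 0 < l \<and> unit_ball_X T (\<lambda>n m. h n m / complex_of_real l)})"
  unfolding normX_def by (rule arg_cong[where f = Inf]) auto

lemma normX_eq_0_imp_eq_0:
  assumes T: "0 < T" "T \<le> 1" and "normX T h = 0" and "1 \<le> n"
  shows "h n m = 0"
proof (rule ccontr)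
  assume "h n m \<noteq> 0"
  define \<epsilon> where "\<epsilon> = norm (h n m) / 4"
  have "0 < \<epsilon>" using \<open>h n m \<noteq> 0\<close> by (simp add: \<epsilon>_def)
  then have "normX T h < ereal \<epsilon>" using assms(3) by simp
  then obtain l where l: "0 < l" "l < \<epsilon>" "unit_ball_X T (\<lambda>n m. h n m / complex_of_real l)"
    unfolding normX_eq_Inf by (auto simp: Inf_less_iff)
  have "(norm (h n m) / l)\<^sup>2 \<le> 10 * T"
    using unit_ball_X_entry_le[OF T l(3) \<open>1 \<le> n\<close>, of m] l(1) by (simp add: norm_divide)
  also have "\<dots> \<le> 4\<^sup>2" using T by simp
  finally have "norm (h n m) / l \<le> 4"
    by (rule power2_le_imp_le) simp
  then show False using l by (simp add: \<epsilon>_def divide_le_eq)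
qed

lemma ereal_le_mult_Inf_Inf:
  fixes A B :: "real set" and c s :: real
  assumes A: "A \<subseteq> {0<..}" and B: "B \<subseteq> {0<..}" and "0 < c" "0 \<le> s"
    and bound: "\<And>x y. x \<in> A \<Longrightarrow> y \<in> B \<Longrightarrow> s \<le> c * x * y"
    and zero: "Inf (ereal ` A) = 0 \<or> Inf (ereal ` B) = 0 \<Longrightarrow> s = 0"
    \<comment> \<open>needed because \<open>0 * \<infinity> = 0\<close> in the extended reals\<close>
  shows "ereal s \<le> ereal c * Inf (ereal ` A) * Inf (ereal ` B)"
proof -
  define X where "X = Inf (ereal ` A)"
  define Y where "Y = Inf (ereal ` B)"
  have "0 \<le> X" "0 \<le> Y"
    using A B unfolding X_def Y_def by (auto intro!: Inf_greatest)
  consider "X = 0 \<or> Y = 0" | "0 < X" "0 < Y" "X = \<infinity> \<or> Y = \<infinity>" | x y where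
      "0 < x" "0 < y" "X = ereal x" "Y = ereal y"
    using \<open>0 \<le> X\<close> \<open>0 \<le> Y\<close> by (cases X; cases Y) (auto simp: order.order_iff_strict)
  then show ?thesis
  proof cases
    case 1
    then show ?thesis
      using zero \<open>0 \<le> X\<close> \<open>0 \<le> Y\<close> \<open>0 < c\<close> by (auto simp: X_def Y_def)
  next
    case 2
    have "0 < ereal c * X" using 2 \<open>0 < c\<close> by (simp add: ereal_zero_less_0_iff)
    then show ?thesis using 2 \<open>0 < c\<close> by (auto simp: X_def Y_def ereal_mult_infty ereal_infty_mult)
  next
    case 3
    have "s / (c * x) \<le> y'" if "y' \<in> B" for y'
    proof -
      have cy: "0 < c * y'" using that B \<open>0 < c\<close> by auto
      have "s / (c * y') \<le> x'" if "x' \<in> A" for x'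
        using bound[OF that \<open>y' \<in> B\<close>] cy by (simp add: pos_divide_le_eq mult_ac)
      then have "ereal (s / (c * y')) \<le> X"
        unfolding X_def by (auto intro!: Inf_greatest)
      then have "s / (c * y') \<le> x" using 3 by simp
      then show ?thesis using cy 3 \<open>0 < c\<close> by (simp add: pos_divide_le_eq mult_ac)
    qed
    then have "ereal (s / (c * x)) \<le> Y"
      unfolding Y_def by (auto intro!: Inf_greatest)
    then show ?thesis using 3 \<open>0 < c\<close> by (simp add: X_def Y_def divide_le_eq mult_ac)
  qed
qed

theorem lemma2p3:
  shows "\<exists>C :: real. C > 0 \<and>
    (\<forall>T :: real. \<forall>f g :: nat \<Rightarrow> int \<Rightarrow> complex. 0 < T \<and> T \<le> 1 \<longrightarrow>
       ereal (norm (\<Sum>\<^sub>\<infinity>(n,m)\<in>idx. f n m * g n m))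
         \<le> ereal (C * T) * normX T f * normX T g)"
proof (intro exI[of _ 10] conjI allI impI)
  show "(10::real) > 0" by simp
  fix T :: real and f g :: "nat \<Rightarrow> int \<Rightarrow> complex"
  assume "0 < T \<and> T \<le> 1"
  then have T: "0 < T" "T \<le> 1" by auto
  have vanishing: "(\<Sum>\<^sub>\<infinity>(n, m)\<in>idx. f n m * g n m) = 0" if "normX T f = 0 \<or> normX T g = 0"
    using that normX_eq_0_imp_eq_0[OF T] by (intro infsum_0) (auto simp: idx_def)
  show "ereal (norm (\<Sum>\<^sub>\<infinity>(n, m)\<in>idx. f n m * g n m)) \<le> ereal (10 * T) * normX T f * normX T g"
    unfolding normX_eq_Inf
    by (rule ereal_le_mult_Inf_Inf)
      (use T vanishing unit_ball_X_scaled_infsum_mult_le[OF T] in \<open>auto simp: normX_eq_Inf\<close>)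
qed

end
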